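(* Let $n,m\ge1$, $r>0$, and let $\mathbf b_1,\dots,\mathbf b_m\in[0,\infty)^n$ be nonzero vectors with nonnegative entries. Consider the system, in the unknown $\mathbf u\in\mathbb{R}^n$, $$\frac{r}{m}\sum_{j=1}^m\frac{\mathbf b_j}{\mathbf u\cdot\mathbf b_j}-\mathbf u=0 .$$ Then this system has at most one solution $\mathbf u$ with $\mathbf u\cdot\mathbf b_j>0$ for all $j=1,\dots,m$; and if $\mathbf u$ is such a solution, then $\mathbf u\cdot\mathbf u=r$ and $\widehat l(\mathbf u)=\prod_{j=1}^m(\mathbf u\cdot\mathbf b_j)$ equals the global maximum of $\widehat l$ on the sphere $\{\mathbf u\in\mathbb{R}^n:\sum_{i=1}^n u_i^2=r\}$.
   Context: The system is the Lagrange multiplier condition (with the multiplier eliminated) for maximizing $\widehat l(\mathbf u)=\prod_j(\mathbf u\cdot\mathbf b_j)$ on the sphere $\sum_iu_i^2=r$; in the application $b_{ij}=v_i\varphi_i(x_j)$ for nonnegative window functions $\varphi_i$ and observations $x_j$. *)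

theory Defs
  imports "HOL-Analysis.Analysis"
begin

definition lhat :: "nat \<Rightarrow> (nat \<Rightarrow> real^'n) \<Rightarrow> real^'n \<Rightarrow> real" where
  "lhat m b u = (\<Prod>j<m. u \<bullet> b j)"

definition is_pos_solution :: "nat \<Rightarrow> real \<Rightarrow> (nat \<Rightarrow> real^'n) \<Rightarrow> real^'n \<Rightarrow> bool" where
  "is_pos_solution m r b u \<longleftrightarrow>
     (\<forall>j<m. u \<bullet> b j > 0) \<and>
     (r / real m) *\<^sub>R (\<Sum>j<m. (1 / (u \<bullet> b j)) *\<^sub>R b j) - u = 0"

end

theory Submission
  imports Defs
begin

text \<open>
  If \<open>u\<close> is a positive solution, then pairing the system with any \<open>v\<close> gives
  \<open>v \<bullet> u = (r/m) \<Sum>\<^sub>j (v \<bullet> b\<^sub>j)/(u \<bullet> b\<^sub>j)\<close>, so \<open>u \<bullet> u = r\<close>, and by AM-GM applied to the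
  ratios \<open>(v \<bullet> b\<^sub>j)/(u \<bullet> b\<^sub>j)\<close> one gets \<open>l(v) \<le> l(u) (v \<bullet> u / r)\<^sup>m\<close> whenever all
  \<open>v \<bullet> b\<^sub>j \<ge> 0\<close>. On the sphere \<open>v \<bullet> u \<le> r\<close> by Cauchy-Schwarz, so \<open>u\<close> maximises \<open>l\<close>
  among vectors with \<open>v \<bullet> b\<^sub>j \<ge> 0\<close>; replacing \<open>v\<close> by its componentwise absolute
  value removes that restriction, since the \<open>b\<^sub>j\<close> are nonnegative. For two positive
  solutions \<open>u, v\<close> the bound forces \<open>v \<bullet> u = r = u \<bullet> u = v \<bullet> v\<close>, hence \<open>u = v\<close>.
\<close>

lemma prod_le_mean_power:
  fixes x :: "'a \<Rightarrow> real"
  assumes "finite S" "S \<noteq> {}" "\<And>i. i \<in> S \<Longrightarrow> x i \<ge> 0"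
  shows "(\<Prod>i\<in>S. x i) \<le> ((\<Sum>i\<in>S. x i) / card S) ^ card S"
proof -
  let ?P = "\<Prod>i\<in>S. x i"
  have card_pos: "card S > 0" using assms by (simp add: card_gt_0_iff)
  have geom_le_arith: "?P powr (1 / card S) \<le> (\<Sum>i\<in>S. x i) / card S"
    using arith_geom_mean[OF assms] by (simp add: sum_divide_distrib)
  have "?P = (?P powr (1 / card S)) ^ card S"
  proof (cases "?P = 0")
    case False
    then have "?P > 0" using assms by (simp add: prod_nonneg less_le)
    then show ?thesis using card_pos by (simp add: powr_realpow[symmetric] powr_powr)
  qed (use card_pos in simp)
  also have "\<dots> \<le> ((\<Sum>i\<in>S. x i) / card S) ^ card S"
    by (rule power_mono[OF geom_le_arith]) simp
  finally show ?thesis .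
qed

lemma inner_diff_self_common_square:
  fixes x y :: "'a::real_inner"
  assumes "x \<bullet> x = r" "y \<bullet> y = r"
  shows "(x - y) \<bullet> (x - y) = 2 * r - 2 * (x \<bullet> y)"
  using assms by (simp add: inner_diff inner_commute)

lemma inner_le_common_square:
  fixes x y :: "'a::real_inner"
  assumes "x \<bullet> x = r" "y \<bullet> y = r"
  shows "x \<bullet> y \<le> r"
  using inner_diff_self_common_square[OF assms] inner_ge_zero[of "x - y"] by linarith

lemma eq_if_inner_eq_common_square:
  fixes x y :: "'a::real_inner"
  assumes "x \<bullet> x = r" "y \<bullet> y = r" "x \<bullet> y = r"
  shows "x = y"
  using inner_diff_self_common_square[OF assms(1,2)] assms(3) by simp

lemma pos_solution_inner_pos:
  "is_pos_solution m r b u \<Longrightarrow> j < m \<Longrightarrow> u \<bullet> b j > 0"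
  unfolding is_pos_solution_def by blast

lemma lhat_pos_solution_pos:
  "is_pos_solution m r b u \<Longrightarrow> lhat m b u > 0"
  unfolding lhat_def by (auto intro: prod_pos pos_solution_inner_pos)

lemma pos_solution_inner:
  assumes "is_pos_solution m r b u"
  shows "v \<bullet> u = r / real m * (\<Sum>j<m. (v \<bullet> b j) / (u \<bullet> b j))"
proof -
  have "u = (r / real m) *\<^sub>R (\<Sum>j<m. (1 / (u \<bullet> b j)) *\<^sub>R b j)"
    using assms unfolding is_pos_solution_def by simp
  then have "v \<bullet> u = v \<bullet> ((r / real m) *\<^sub>R (\<Sum>j<m. (1 / (u \<bullet> b j)) *\<^sub>R b j))"
    by simp
  then show ?thesis
    by (simp add: inner_sum_right)
qed

lemma pos_solution_inner_self:
  assumes "is_pos_solution m r b u" "m \<ge> 1"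
  shows "u \<bullet> u = r"
proof -
  have "(\<Sum>j<m. (u \<bullet> b j) / (u \<bullet> b j)) = (\<Sum>j<m. 1)"
    by (intro sum.cong) (auto dest!: pos_solution_inner_pos[OF assms(1)])
  then show ?thesis
    using pos_solution_inner[OF assms(1), of u] assms(2) by simp
qed

lemma pos_solution_inner_nonneg:
  assumes "is_pos_solution m r b u" "r > 0" "\<And>j. j < m \<Longrightarrow> v \<bullet> b j \<ge> 0"
  shows "v \<bullet> u \<ge> 0"
  unfolding pos_solution_inner[OF assms(1)]
  using assms pos_solution_inner_pos[OF assms(1)]
  by (intro mult_nonneg_nonneg sum_nonneg divide_nonneg_nonneg) (auto intro: less_imp_le)

lemma lhat_le_pos_solution_mult_power:
  assumes sol: "is_pos_solution m r b u" and "m \<ge> 1" "r > 0"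
    and v_nonneg: "\<And>j. j < m \<Longrightarrow> v \<bullet> b j \<ge> 0"
  shows "lhat m b v \<le> lhat m b u * ((v \<bullet> u) / r) ^ m"
proof -
  note u_pos = pos_solution_inner_pos[OF sol]
  define ratio where "ratio j = (v \<bullet> b j) / (u \<bullet> b j)" for j
  have prod_eq: "lhat m b v = lhat m b u * (\<Prod>j<m. ratio j)"
    unfolding lhat_def ratio_def using u_pos
    by (simp add: prod_dividef less_imp_neq[symmetric] prod_zero_iff)
  have mean_eq: "(\<Sum>j<m. ratio j) / m = (v \<bullet> u) / r"
    using pos_solution_inner[OF sol, of v] \<open>r > 0\<close> \<open>m \<ge> 1\<close> by (simp add: ratio_def field_simps)
  have "\<And>j. j < m \<Longrightarrow> ratio j \<ge> 0"
    unfolding ratio_def using v_nonneg u_pos by (simp add: less_imp_le)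
  then have "(\<Prod>j<m. ratio j) \<le> ((v \<bullet> u) / r) ^ m"
    unfolding mean_eq[symmetric]
    using prod_le_mean_power[of "{..<m}" ratio] \<open>m \<ge> 1\<close> by (simp add: lessThan_empty_iff)
  then show ?thesis
    unfolding prod_eq using lhat_pos_solution_pos[OF sol] by simp
qed

lemma lhat_le_pos_solution_of_nonneg:
  assumes sol: "is_pos_solution m r b u" and "m \<ge> 1" "r > 0"
    and v_nonneg: "\<And>j. j < m \<Longrightarrow> v \<bullet> b j \<ge> 0" and "v \<bullet> v = r"
  shows "lhat m b v \<le> lhat m b u"
proof -
  have "v \<bullet> u \<le> r"
    using inner_le_common_square[OF \<open>v \<bullet> v = r\<close> pos_solution_inner_self[OF sol \<open>m \<ge> 1\<close>]] .
  then have "((v \<bullet> u) / r) ^ m \<le> 1"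
    using pos_solution_inner_nonneg[OF sol \<open>r > 0\<close> v_nonneg] \<open>r > 0\<close> by (simp add: power_le_one)
  then have "lhat m b u * ((v \<bullet> u) / r) ^ m \<le> lhat m b u"
    using lhat_pos_solution_pos[OF sol] by (simp add: mult_left_le)
  with lhat_le_pos_solution_mult_power[OF sol \<open>m \<ge> 1\<close> \<open>r > 0\<close> v_nonneg] show ?thesis
    by linarith
qed

lemma pos_solution_unique:
  assumes su: "is_pos_solution m r b u" and sv: "is_pos_solution m r b v"
    and "m \<ge> 1" "r > 0"
  shows "u = v"
proof -
  have uu: "u \<bullet> u = r" and vv: "v \<bullet> v = r"
    using pos_solution_inner_self su sv \<open>m \<ge> 1\<close> by blast+
  have u_nonneg: "\<And>j. j < m \<Longrightarrow> u \<bullet> b j \<ge> 0"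
    using pos_solution_inner_pos[OF su] by (simp add: less_imp_le)
  have v_nonneg: "\<And>j. j < m \<Longrightarrow> v \<bullet> b j \<ge> 0"
    using pos_solution_inner_pos[OF sv] by (simp add: less_imp_le)
  have "lhat m b u \<le> lhat m b u * ((v \<bullet> u) / r) ^ m"
    using lhat_le_pos_solution_of_nonneg[OF sv \<open>m \<ge> 1\<close> \<open>r > 0\<close> u_nonneg uu]
      lhat_le_pos_solution_mult_power[OF su \<open>m \<ge> 1\<close> \<open>r > 0\<close> v_nonneg]
    by linarith
  then have "1 \<le> ((v \<bullet> u) / r) ^ m"
    using lhat_pos_solution_pos[OF su] by simp
  moreover have "0 \<le> (v \<bullet> u) / r"
    using pos_solution_inner_nonneg[OF su \<open>r > 0\<close> v_nonneg] \<open>r > 0\<close> by simp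
  ultimately have "1 \<le> (v \<bullet> u) / r"
    using \<open>m \<ge> 1\<close> power_less_one_iff[of "(v \<bullet> u) / r" m] by linarith
  then have "v \<bullet> u = r"
    using inner_le_common_square[OF vv uu] \<open>r > 0\<close> by simp
  then show ?thesis
    using eq_if_inner_eq_common_square[OF vv uu] by simp
qed

lemma abs_inner_le_inner_abs:
  fixes v b :: "real^'n"
  assumes "\<And>i. b $ i \<ge> 0"
  shows "\<bar>v \<bullet> b\<bar> \<le> (\<chi> i. \<bar>v $ i\<bar>) \<bullet> b"
proof -
  have "\<bar>v \<bullet> b\<bar> \<le> (\<Sum>i\<in>UNIV. \<bar>v $ i * b $ i\<bar>)"
    unfolding inner_vec_def inner_real_def by (rule sum_abs)
  also have "\<dots> = (\<chi> i. \<bar>v $ i\<bar>) \<bullet> b"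
    using assms by (simp add: inner_vec_def abs_mult)
  finally show ?thesis .
qed

lemma inner_self_abs_vec: "(\<chi> i. \<bar>v $ i\<bar>) \<bullet> (\<chi> i. \<bar>v $ i\<bar>) = v \<bullet> (v :: real^'n)"
  by (simp add: inner_vec_def abs_mult_self_eq)

lemma lhat_le_lhat_abs_vec:
  assumes "\<And>j i. j < m \<Longrightarrow> b j $ i \<ge> 0"
  shows "lhat m b v \<le> lhat m b (\<chi> i. \<bar>v $ i\<bar>)"
proof -
  have "lhat m b v \<le> (\<Prod>j<m. \<bar>v \<bullet> b j\<bar>)"
    unfolding lhat_def abs_prod[symmetric] by simp
  also have "\<dots> \<le> lhat m b (\<chi> i. \<bar>v $ i\<bar>)"
    unfolding lhat_def using abs_inner_le_inner_abs assms by (intro prod_mono) auto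
  finally show ?thesis .
qed

lemma lhat_le_pos_solution:
  assumes sol: "is_pos_solution m r b u" and "m \<ge> 1" "r > 0"
    and b_nonneg: "\<And>j i. j < m \<Longrightarrow> b j $ i \<ge> 0" and "v \<bullet> v = r"
  shows "lhat m b v \<le> lhat m b u"
proof -
  let ?w = "\<chi> i. \<bar>v $ i\<bar>"
  have "0 \<le> ?w \<bullet> b j" if "j < m" for j
    using abs_inner_le_inner_abs[of "b j" v] b_nonneg[OF that] by (meson abs_ge_zero order_trans)
  moreover have "?w \<bullet> ?w = r"
    using \<open>v \<bullet> v = r\<close> by (simp only: inner_self_abs_vec)
  ultimately have "lhat m b ?w \<le> lhat m b u"
    by (rule lhat_le_pos_solution_of_nonneg[OF sol \<open>m \<ge> 1\<close> \<open>r > 0\<close>])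
  with lhat_le_lhat_abs_vec[OF b_nonneg] show ?thesis
    by (rule order_trans)
qed

theorem theorem3:
  fixes m :: nat and r :: real and b :: "nat \<Rightarrow> real^'n"
  assumes "m \<ge> 1" and "r > 0"
    and "\<And>j. j < m \<Longrightarrow> b j \<noteq> 0"
    and "\<And>j i. j < m \<Longrightarrow> b j $ i \<ge> 0"
  shows "(\<forall>u v. is_pos_solution m r b u \<and> is_pos_solution m r b v \<longrightarrow> u = v)
    \<and> (\<forall>u. is_pos_solution m r b u \<longrightarrow>
          u \<bullet> u = r \<and>
          lhat m b u = (GREATEST t. \<exists>v. (\<Sum>i\<in>UNIV. (v $ i)\<^sup>2) = r \<and> t = lhat m b v))"
proof (intro conjI allI impI)
  fix u v assume "is_pos_solution m r b u \<and> is_pos_solution m r b v"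
  then show "u = v" using pos_solution_unique assms(1,2) by blast
next
  fix u assume sol: "is_pos_solution m r b u"
  show uu: "u \<bullet> u = r" using pos_solution_inner_self[OF sol assms(1)] .
  have sum_sq: "(\<Sum>i\<in>UNIV. (v $ i)\<^sup>2) = v \<bullet> v" for v :: "real^'n"
    by (simp add: inner_vec_def power2_eq_square)
  show "lhat m b u = (GREATEST t. \<exists>v. (\<Sum>i\<in>UNIV. (v $ i)\<^sup>2) = r \<and> t = lhat m b v)"
  proof (rule Greatest_equality[symmetric])
    show "\<exists>v. (\<Sum>i\<in>UNIV. (v $ i)\<^sup>2) = r \<and> lhat m b u = lhat m b v"
      using uu by (simp only: sum_sq) blast
  next
    fix t assume "\<exists>v. (\<Sum>i\<in>UNIV. (v $ i)\<^sup>2) = r \<and> t = lhat m b v"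
    then show "t \<le> lhat m b u"
      using lhat_le_pos_solution[OF sol assms(1,2,4)] by (auto simp only: sum_sq)
  qed
qed

end
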